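(* Under the standing setup, let $\mathcal S_\dagger\subset\mathbb R^D$ be a finite nonempty anchor set and let $\hat V_\tau(s,l,t)$, for $s\in\mathcal S_\dagger$, $l\in\{0,\dots,k\}$, $t\in\{0,\dots,T-1\}$, be the values computed by the anchor recursion. Then $\hat V_\tau(s,l,t)\ge V_\tau(s,l,t)$ for all such $s,l,t$.
   Context: Standing setup: state space $\mathcal S=\mathbb R^D$, finite action set $\mathcal A$, horizon $T\ge2$, noise space $\mathcal U$. A transition mechanism $g_S:\mathcal S\times\mathcal A\times\mathcal U\to\mathcal S$ is bijective in its last argument, with inverse $g_S^{-1}:\mathcal S\times\mathcal A\times\mathcal S\to\mathcal U$ satisfying $u=g_S^{-1}(s,a,s')$ whenever $s'=g_S(s,a,u)$. Reward $R:\mathcal S\times\mathcal A\to\mathbb R$. Lipschitz assumption: for each $a\in\mathcal A,u\in\mathcal U$ there is $K_{a,u}\ge0$ with $\|g_S(s,a,u)-g_S(s',a,u)\|\le K_{a,u}\|s-s'\|$, and for each $a$ there is $C_a\ge0$ with $|R(s,a)-R(s',a)|\le C_a\|s-s'\|$, for all $s,s'\in\mathcal S$ (Euclidean norm). An observed episode $\tau$ consists of states $s_0,\dots,s_{T-1}$ and actions $a_0,\dots,a_{T-1}$; put $u_t=g_S^{-1}(s_t,a_t,s_{t+1})$ for $t=0,\dots,T-2$. Fix a budget $k\in\{0,\dots,T\}$. For $t\le T-2$ define $F^+_{\tau,t}((s,l),a)=\big(g_S(s,a,u_t),\,l+\mathbf 1[a\ne a_t]\big)$. For $t\in\{0,\dots,T-1\}$,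 $l\in\{0,\dots,k\}$, $s\in\mathcal S$, the value $V_\tau(s,l,t)$ is the maximum of $\sum_{t'=t}^{T-1}R(s'_{t'},a'_{t'})$ over action sequences $a'_t,\dots,a'_{T-1}\in\mathcal A$ with $\sum_{t'=t}^{T-1}\mathbf 1[a'_{t'}\ne a_{t'}]\le k-l$, where $s'_t=s$ and $s'_{t'+1}=g_S(s'_{t'},a'_{t'},u_{t'})$. Constants: $K_{u_t}=\max_{a}K_{a,u_t}$, $C=\max_a C_a$, $L_{T-1}=C$, $L_t=C+L_{t+1}K_{u_t}$ for $t\le T-2$. For $l\in\{0,\dots,k\}$ and time $t$, let $\mathcal A'_{l,t}=\{a_t\}$ if $l=k$ and $\mathcal A'_{l,t}=\mathcal A$ if $l<k$. Anchor recursion (defined only for $s\in\mathcal S_\dagger$): $\hat V_\tau(s,l,T-1)=\max_{a\in\mathcal A}R(s,a)$ for $l<k$ and $\hat V_\tau(s,k,T-1)=R(s,a_{T-1})$; for $t=T-2,\dots,0$ and $l=k,\dots,0$, $$\hat V_\tau(s,l,t)=\max_{a\in\mathcal A'_{l,t}}\Big\{R(s,a)+\min_{s_\dagger\in\mathcal S_\dagger}\big\{\hat V_\tau(s_\dagger,l_a,t+1)+L_{t+1}\|s_\dagger-s_a\|\big\}\Big\},$$ where $(s_a,l_a)=F^+_{\tau,t}((s,l),a)$. *)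

theory Defs
  imports "HOL-Analysis.Analysis"
begin

definition noise :: "('s \<Rightarrow> 'a \<Rightarrow> 's \<Rightarrow> 'u) \<Rightarrow> (nat \<Rightarrow> 's) \<Rightarrow> (nat \<Rightarrow> 'a) \<Rightarrow> nat \<Rightarrow> 'u" where
  "noise ginv st act t = ginv (st t) (act t) (st (Suc t))"

primrec roll :: "('s \<Rightarrow> 'a \<Rightarrow> 'u \<Rightarrow> 's) \<Rightarrow> (nat \<Rightarrow> 'u) \<Rightarrow> (nat \<Rightarrow> 'a) \<Rightarrow> 's \<Rightarrow> nat \<Rightarrow> nat \<Rightarrow> 's" where
  "roll g u b s t 0 = s"
| "roll g u b s t (Suc j) = g (roll g u b s t j) (b (t + j)) (u (t + j))"

definition Vtrue ::
  "('s \<Rightarrow> 'a \<Rightarrow> 'u \<Rightarrow> 's) \<Rightarrow> ('s \<Rightarrow> 'a \<Rightarrow> 's \<Rightarrow> 'u) \<Rightarrow> ('s \<Rightarrow> 'a \<Rightarrow> real) \<Rightarrow>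
   nat \<Rightarrow> nat \<Rightarrow> (nat \<Rightarrow> 's) \<Rightarrow> (nat \<Rightarrow> 'a) \<Rightarrow> 's \<Rightarrow> nat \<Rightarrow> nat \<Rightarrow> real" where
  "Vtrue g ginv R T k st act s l t =
     Max {(\<Sum>j<T - t. R (roll g (noise ginv st act) b s t j) (b (t + j))) | b.
            (\<Sum>j<T - t. (if b (t + j) \<noteq> act (t + j) then 1 else 0 :: nat)) \<le> k - l}"

definition Ku :: "('a::finite \<Rightarrow> 'u \<Rightarrow> real) \<Rightarrow> (nat \<Rightarrow> 'u) \<Rightarrow> nat \<Rightarrow> real" where
  "Ku K u t = Max (range (\<lambda>a. K a (u t)))"

text \<open>Lrem m = L_{T-1-m}: L_{T-1} = C, L_t = C + L_{t+1} K_{u_t}, with C = max_a C_a.\<close>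
primrec Lrem :: "('a::finite \<Rightarrow> 'u \<Rightarrow> real) \<Rightarrow> ('a \<Rightarrow> real) \<Rightarrow> (nat \<Rightarrow> 'u) \<Rightarrow> nat \<Rightarrow> nat \<Rightarrow> real" where
  "Lrem K Cf u T 0 = Max (range Cf)"
| "Lrem K Cf u T (Suc m) = Max (range Cf) + Lrem K Cf u T m * Ku K u (T - 2 - m)"

definition Lconst :: "('a::finite \<Rightarrow> 'u \<Rightarrow> real) \<Rightarrow> ('a \<Rightarrow> real) \<Rightarrow> (nat \<Rightarrow> 'u) \<Rightarrow> nat \<Rightarrow> nat \<Rightarrow> real" where
  "Lconst K Cf u T t = Lrem K Cf u T (T - 1 - t)"

definition Aset :: "nat \<Rightarrow> (nat \<Rightarrow> 'a) \<Rightarrow> nat \<Rightarrow> nat \<Rightarrow> 'a set" where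
  "Aset k act l t = (if l = k then {act t} else UNIV)"

text \<open>Anchor recursion, indexed by the number m of remaining steps (time t = T-1-m).\<close>
primrec Vrem ::
  "('s::real_normed_vector \<Rightarrow> 'a::finite \<Rightarrow> 'u \<Rightarrow> 's) \<Rightarrow> ('s \<Rightarrow> 'a \<Rightarrow> real) \<Rightarrow>
   ('a \<Rightarrow> 'u \<Rightarrow> real) \<Rightarrow> ('a \<Rightarrow> real) \<Rightarrow> (nat \<Rightarrow> 'u) \<Rightarrow> nat \<Rightarrow> nat \<Rightarrow> (nat \<Rightarrow> 'a) \<Rightarrow>
   's set \<Rightarrow> nat \<Rightarrow> 's \<Rightarrow> nat \<Rightarrow> real" where
  "Vrem g R K Cf u T k act Sd 0 s l =
     (if l < k then Max (range (R s)) else R s (act (T - 1)))"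
| "Vrem g R K Cf u T k act Sd (Suc m) s l =
     (let t = T - 2 - m in
      Max ((\<lambda>a. R s a + Min ((\<lambda>sd. Vrem g R K Cf u T k act Sd m sd
                                        (l + (if a \<noteq> act t then 1 else 0))
                                   + Lconst K Cf u T (Suc t) * norm (sd - g s a (u t))) ` Sd))
           ` Aset k act l t))"

definition Vhat ::
  "('s::real_normed_vector \<Rightarrow> 'a::finite \<Rightarrow> 'u \<Rightarrow> 's) \<Rightarrow> ('s \<Rightarrow> 'a \<Rightarrow> 's \<Rightarrow> 'u) \<Rightarrow>
   ('s \<Rightarrow> 'a \<Rightarrow> real) \<Rightarrow> ('a \<Rightarrow> 'u \<Rightarrow> real) \<Rightarrow> ('a \<Rightarrow> real) \<Rightarrow> nat \<Rightarrow> nat \<Rightarrow>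
   (nat \<Rightarrow> 's) \<Rightarrow> (nat \<Rightarrow> 'a) \<Rightarrow> 's set \<Rightarrow> 's \<Rightarrow> nat \<Rightarrow> nat \<Rightarrow> real" where
  "Vhat g ginv R K Cf T k st act Sd s l t =
     Vrem g R K Cf (noise ginv st act) T k act Sd (T - 1 - t) s l"

end

theory Submission
  imports Defs
begin

text \<open>Fix an admissible action sequence. Its counterfactual return from time \<open>t\<close> is
  \<open>L\<^sub>t\<close>-Lipschitz in the starting state: one step contributes the reward constant \<open>C\<close>,
  and the remaining return, which is \<open>L\<^sub>t\<^sub>+\<^sub>1\<close>-Lipschitz, is evaluated after a transition
  that stretches distances by at most \<open>K\<^sub>u\<^sub>t\<close>. So the return from the successor state
  \<open>s\<^sub>a\<close> is bounded by \<open>V\<^sub>\<tau>(s\<^sub>\<dagger>) + L\<^sub>t\<^sub>+\<^sub>1 \<parallel>s\<^sub>\<dagger> - s\<^sub>a\<parallel>\<close> for every anchor \<open>s\<^sub>\<dagger>\<close>, and backward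
  induction on \<open>t\<close> shows that the anchor values dominate the return of every admissible
  sequence, in particular of an optimal one.\<close>

definition deviations :: "(nat \<Rightarrow> 'a) \<Rightarrow> (nat \<Rightarrow> 'a) \<Rightarrow> nat \<Rightarrow> nat \<Rightarrow> nat" where
  "deviations act b t n = (\<Sum>j<n. if b (t + j) \<noteq> act (t + j) then 1 else 0)"

lemma deviations_Suc:
  "deviations act b t (Suc n) = (if b t \<noteq> act t then 1 else 0) + deviations act b (Suc t) n"
  unfolding deviations_def by (subst sum.lessThan_Suc_shift) simp

definition cf_return ::
  "('s \<Rightarrow> 'a \<Rightarrow> 'u \<Rightarrow> 's) \<Rightarrow> (nat \<Rightarrow> 'u) \<Rightarrow> ('s \<Rightarrow> 'a \<Rightarrow> real) \<Rightarrow> (nat \<Rightarrow> 'a) \<Rightarrow>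
   nat \<Rightarrow> nat \<Rightarrow> 's \<Rightarrow> real" where
  "cf_return g u R b t n s = (\<Sum>j<n. R (roll g u b s t j) (b (t + j)))"

lemma roll_Suc_start:
  "roll g u b s t (Suc j) = roll g u b (g s (b t) (u t)) (Suc t) j"
  by (induction j) auto

lemma cf_return_Suc:
  "cf_return g u R b t (Suc n) s = R s (b t) + cf_return g u R b (Suc t) n (g s (b t) (u t))"
  unfolding cf_return_def by (subst sum.lessThan_Suc_shift) (simp only: roll_Suc_start, simp)

lemma roll_restrict:
  assumes "j \<le> T - t"
  shows "roll g u (restrict b {t..<T}) s t j = roll g u b s t j"
  using assms by (induction j) auto

lemma cf_return_restrict:
  assumes "n \<le> T - t"
  shows "cf_return g u R (restrict b {t..<T}) t n s = cf_return g u R b t n s"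
  unfolding cf_return_def using assms by (intro sum.cong) (auto simp: roll_restrict)

lemma Vtrue_attained:
  fixes act :: "nat \<Rightarrow> 'a::finite"
  obtains b where "deviations act b t (T - t) \<le> k - l"
    and "Vtrue g ginv R T k st act s l t = cf_return g (noise ginv st act) R b t (T - t) s"
proof -
  let ?f = "\<lambda>b. cf_return g (noise ginv st act) R b t (T - t) s"
  define S where "S = {?f b | b. deviations act b t (T - t) \<le> k - l}"
  have "Vtrue g ginv R T k st act s l t = Max S"
    unfolding Vtrue_def S_def cf_return_def deviations_def ..
  moreover have "S \<subseteq> ?f ` (PiE {t..<T} (\<lambda>_. UNIV))"
  proof
    fix x
    assume "x \<in> S"
    then obtain b where "x = ?f b"
      unfolding S_def by blast
    also have "\<dots> = ?f (restrict b {t..<T})"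
      by (rule cf_return_restrict[symmetric]) simp
    finally show "x \<in> ?f ` (PiE {t..<T} (\<lambda>_. UNIV))"
      by auto
  qed
  then have "finite S"
    by (rule finite_subset) (intro finite_imageI finite_PiE; simp)
  moreover have "?f act \<in> S"
    unfolding S_def deviations_def by auto
  ultimately have "Vtrue g ginv R T k st act s l t \<in> S"
    using Max_in by auto
  then show thesis
    using that unfolding S_def by blast
qed

locale lipschitz_dynamics =
  fixes g :: "'s::real_normed_vector \<Rightarrow> 'a::finite \<Rightarrow> 'u \<Rightarrow> 's"
    and R :: "'s \<Rightarrow> 'a \<Rightarrow> real"
    and K :: "'a \<Rightarrow> 'u \<Rightarrow> real"
    and Cf :: "'a \<Rightarrow> real"
  assumes K_nonneg: "K a v \<ge> 0"
    and g_lipschitz: "norm (g s a v - g s' a v) \<le> K a v * norm (s - s')"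
    and Cf_nonneg: "Cf a \<ge> 0"
    and R_lipschitz: "\<bar>R s a - R s' a\<bar> \<le> Cf a * norm (s - s')"
begin

lemma R_lipschitz_Max: "\<bar>R s a - R s' a\<bar> \<le> Max (range Cf) * norm (s - s')"
  using R_lipschitz[of s a s'] mult_right_mono[of "Cf a" "Max (range Cf)" "norm (s - s')"]
  by (simp add: Max_ge)

lemma g_lipschitz_Ku: "norm (g s a (u t) - g s' a (u t)) \<le> Ku K u t * norm (s - s')"
  using g_lipschitz[of s a "u t" s'] mult_right_mono[of "K a (u t)" "Ku K u t" "norm (s - s')"]
  by (simp add: Ku_def Max_ge)

lemma Lrem_nonneg: "0 \<le> Lrem K Cf u T m"
proof -
  have "0 \<le> Max (range Cf)"
    using Cf_nonneg by (auto simp: Max_ge_iff)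
  moreover have "0 \<le> Ku K u t" for t
    using K_nonneg by (auto simp: Ku_def Max_ge_iff)
  ultimately show ?thesis
    by (induction m) simp_all
qed

lemma cf_return_lipschitz:
  assumes "t + m + 1 = T"
  shows "\<bar>cf_return g u R b t (Suc m) s - cf_return g u R b t (Suc m) s'\<bar>
           \<le> Lrem K Cf u T m * norm (s - s')"
  using assms
proof (induction m arbitrary: t s s')
  case 0
  then show ?case
    using R_lipschitz_Max by (simp add: cf_return_def)
next
  case (Suc m)
  let ?next = "\<lambda>s. g s (b t) (u t)"
  have "\<bar>cf_return g u R b (Suc t) (Suc m) (?next s) - cf_return g u R b (Suc t) (Suc m) (?next s')\<bar>
          \<le> Lrem K Cf u T m * norm (?next s - ?next s')"
    using Suc by simp
  also have "\<dots> \<le> Lrem K Cf u T m * (Ku K u t * norm (s - s'))"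
    by (intro mult_left_mono g_lipschitz_Ku Lrem_nonneg)
  finally have "\<bar>cf_return g u R b t (Suc (Suc m)) s - cf_return g u R b t (Suc (Suc m)) s'\<bar>
      \<le> Max (range Cf) * norm (s - s') + Lrem K Cf u T m * (Ku K u t * norm (s - s'))"
    using R_lipschitz_Max[of s "b t" s'] unfolding cf_return_Suc[of _ _ _ _ _ "Suc m"] by linarith
  moreover have "T - 2 - m = t"
    using Suc.prems by simp
  ultimately show ?case
    by (simp add: algebra_simps)
qed

lemma cf_return_le_anchor_bound:
  assumes "finite Sd" "Sd \<noteq> {}" "t + m + 1 = T"
    and "\<And>sd. sd \<in> Sd \<Longrightarrow> cf_return g u R b t (Suc m) sd \<le> V sd"
  shows "cf_return g u R b t (Suc m) s \<le> Min ((\<lambda>sd. V sd + Lrem K Cf u T m * norm (sd - s)) ` Sd)"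
proof (rule Min.boundedI)
  fix x
  assume "x \<in> (\<lambda>sd. V sd + Lrem K Cf u T m * norm (sd - s)) ` Sd"
  then obtain sd where "sd \<in> Sd" and x: "x = V sd + Lrem K Cf u T m * norm (sd - s)"
    by blast
  then show "cf_return g u R b t (Suc m) s \<le> x"
    using cf_return_lipschitz[OF assms(3), of u b s sd] assms(4)[of sd]
    by (simp add: norm_minus_commute)
qed (use assms in auto)

lemma cf_return_le_Vrem:
  assumes "finite Sd" "Sd \<noteq> {}"
  shows "\<lbrakk>t + m + 1 = T; s \<in> Sd; deviations act b t (Suc m) \<le> k - l; l \<le> k\<rbrakk> \<Longrightarrow>
    cf_return g u R b t (Suc m) s \<le> Vrem g R K Cf u T k act Sd m s l"
proof (induction m arbitrary: t s l)
  case 0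
  then show ?case
    by (cases "l < k") (auto simp: cf_return_def deviations_def Max_ge split: if_splits)
next
  case (Suc m)
  define l' where "l' = l + (if b t \<noteq> act t then 1 else 0)"
  have "t = T - 2 - m" and "T - 1 - Suc t = m"
    using Suc.prems(1) by simp_all
  then have Lconst: "Lconst K Cf u T (Suc t) = Lrem K Cf u T m"
    by (simp add: Lconst_def)
  have "deviations act b (Suc t) (Suc m) \<le> k - l'" "l' \<le> k" "b t \<in> Aset k act l t"
    using Suc.prems(3,4) by (auto simp: deviations_Suc l'_def Aset_def split: if_splits)
  then have "cf_return g u R b t (Suc (Suc m)) s
      \<le> R s (b t) + Min ((\<lambda>sd. Vrem g R K Cf u T k act Sd m sd l'
                               + Lrem K Cf u T m * norm (sd - g s (b t) (u t))) ` Sd)"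
    unfolding cf_return_Suc[of _ _ _ _ _ "Suc m"] using Suc.prems(1)
    by (intro add_left_mono cf_return_le_anchor_bound assms Suc.IH) auto
  also have "\<dots> \<le> Vrem g R K Cf u T k act Sd (Suc m) s l"
    unfolding Vrem.simps Let_def \<open>t = T - 2 - m\<close>[symmetric] Lconst l'_def
    by (rule Max_ge) (auto intro: rev_image_eqI[OF \<open>b t \<in> Aset k act l t\<close>])
  finally show ?case .
qed

end

theorem proposition1:
  fixes g :: "real^'d \<Rightarrow> 'a::finite \<Rightarrow> 'u \<Rightarrow> real^'d"
    and ginv :: "real^'d \<Rightarrow> 'a \<Rightarrow> real^'d \<Rightarrow> 'u"
    and R :: "real^'d \<Rightarrow> 'a \<Rightarrow> real"
    and K :: "'a \<Rightarrow> 'u \<Rightarrow> real"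
    and Cf :: "'a \<Rightarrow> real"
    and T k :: nat
    and st :: "nat \<Rightarrow> real^'d"
    and act :: "nat \<Rightarrow> 'a"
    and Sd :: "(real^'d) set"
  assumes "T \<ge> 2" and "k \<le> T"
    and "\<And>s a. bij (g s a)"
    and "\<And>s a u s'. s' = g s a u \<Longrightarrow> u = ginv s a s'"
    and "\<And>a u. K a u \<ge> 0"
    and "\<And>a u s s'. norm (g s a u - g s' a u) \<le> K a u * norm (s - s')"
    and "\<And>a. Cf a \<ge> 0"
    and "\<And>a s s'. \<bar>R s a - R s' a\<bar> \<le> Cf a * norm (s - s')"
    and "finite Sd" and "Sd \<noteq> {}"
    and "s \<in> Sd" and "l \<le> k" and "t < T"
  shows "Vhat g ginv R K Cf T k st act Sd s l t \<ge> Vtrue g ginv R T k st act s l t"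
proof -
  interpret lipschitz_dynamics g R K Cf
    using assms(5-8) by unfold_locales
  obtain b where "deviations act b t (T - t) \<le> k - l"
    and "Vtrue g ginv R T k st act s l t = cf_return g (noise ginv st act) R b t (T - t) s"
    by (rule Vtrue_attained)
  moreover have "T - t = Suc (T - 1 - t)" and "t + (T - 1 - t) + 1 = T"
    using \<open>t < T\<close> by simp_all
  ultimately show ?thesis
    unfolding Vhat_def using cf_return_le_Vrem[OF assms(9,10)] assms(11,12) by metis
qed

end
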